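(* Let $n\ge 1$, $\gamma>0$, and let $A:[0,1]^{2n}\to\mathbb{R}_+^{n\times n}$ be a $\mathcal C^1$ matrix-valued function. Consider the system of ordinary differential equations $$\dot{x}_i = - x_i\sum_{j=1}^n A_{ij}(x,y)\, y_j,\qquad \dot{y}_i = x_i \sum_{j=1}^n A_{ij}(x,y)\, y_j - \gamma y_i,\qquad i=1,\ldots,n,$$ with state $(x,y)\in\mathbb{R}^n\times\mathbb{R}^n$, and let $\mathcal S=\{(x,y)\in[0,1]^{2n}: x+y\le \mathbf 1\}$. Then: (i) for every initial condition $(x(0),y(0))\in\mathcal S$ there exists a unique solution $(x(t),y(t))$, which is $\mathcal C^1$ and belongs to $\mathcal S$ for every $t\ge 0$; (ii) for every $i$, $x_i(t)$ is non-increasing for $t\ge 0$, and $x_i(0)>0$ if and only if $x_i(t)>0$ for every $t\ge0$; (iii) for every $i$, if $y_i(0)>0$ then $y_i(t)>0$ for every $t>0$; (iv) the set of equilibrium points of the system in $\mathcal S$ is $\mathcal S^*=\{(x^*,\mathbf 0): x^*\in[0,1]^n\}$; (v) for every initial condition in $\mathcal S$ there exists $x^*\in\mathbb{R}_+^n$ with $\mathbf 0\le x^*\le x(0)$ such that $\lim_{t\to+\infty}(x(t),y(t))=(x^*,\mathbf 0)\in\mathcal S^*$.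
   Context: Vector inequalities are entrywise; $\mathbf 1$ and $\mathbf 0$ denote the all-ones and all-zeros vectors in $\mathbb{R}^n$. $x_i$ and $y_i$ represent the fractions of susceptible and infected agents in subpopulation $i$. *)

theory Defs
  imports "HOL-Analysis.Analysis"
begin

definition sir_cube :: "((real^'n) \<times> (real^'n)) set" where
  "sir_cube = {z. \<forall>i. 0 \<le> fst z $ i \<and> fst z $ i \<le> 1 \<and> 0 \<le> snd z $ i \<and> snd z $ i \<le> 1}"

definition sir_S :: "((real^'n) \<times> (real^'n)) set" where
  "sir_S = {z \<in> sir_cube. \<forall>i. fst z $ i + snd z $ i \<le> 1}"

definition sir_field ::
  "((real^'n) \<times> (real^'n) \<Rightarrow> real^'n^'n) \<Rightarrow> real \<Rightarrow> (real^'n) \<times> (real^'n) \<Rightarrow> (real^'n) \<times> (real^'n)" where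
  "sir_field A \<gamma> z =
     ((\<chi> i. - (fst z $ i) * (\<Sum>j\<in>UNIV. A z $ i $ j * snd z $ j)),
      (\<chi> i. (fst z $ i) * (\<Sum>j\<in>UNIV. A z $ i $ j * snd z $ j) - \<gamma> * snd z $ i))"

text \<open>A solution on [0,+oo) with initial condition z0; since A is only defined on
  [0,1]^{2n}, solutions are required to stay in [0,1]^{2n}.\<close>
definition is_sir_solution ::
  "((real^'n) \<times> (real^'n) \<Rightarrow> real^'n^'n) \<Rightarrow> real \<Rightarrow> (real^'n) \<times> (real^'n) \<Rightarrow> (real \<Rightarrow> (real^'n) \<times> (real^'n)) \<Rightarrow> bool" where
  "is_sir_solution A \<gamma> z0 sol \<longleftrightarrow>
     sol 0 = z0 \<and>
     (\<forall>t\<ge>0. sol t \<in> sir_cube \<and>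
        (sol has_vector_derivative sir_field A \<gamma> (sol t)) (at t within {0..}))"

end

(*
  On the cube [0,1]^{2n} the field is C^1, hence Lipschitz.  Composed with the projection onto the
  cube it becomes bounded and globally Lipschitz, and its Picard operator is a contraction for a
  Bielecki-weighted sup norm on the half-line, which gives a unique global solution.  Barrier
  arguments for x_i, y_i and 1 - x_i - y_i keep this solution in S, so it solves the original
  system; conversely every solution of the original system stays in the cube and solves the
  extended one, whence uniqueness.

  Along a solution x_i' = - x_i K_i and y_i' = x_i K_i - gamma y_i with 0 <= K_i <= B, so x_i is
  nonincreasing, x_i(t) >= x_i(0) exp (- B t) and y_i(t) >= y_i(0) exp (- gamma t).  Being
  nonincreasing and nonnegative, x_i and x_i + y_i converge; hence y_i converges, and its limit
  is 0 because (x_i + y_i)' = - gamma y_i.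
*)

theory Submission
  imports Defs
begin

section \<open>Differential inequalities on the half-line\<close>

lemma has_real_derivative_fst_nth:
  fixes f :: "real \<Rightarrow> (real^'n) \<times> (real^'m)"
  assumes "(f has_vector_derivative v) F"
  shows "((\<lambda>t. fst (f t) $ i) has_real_derivative fst v $ i) F"
  using bounded_linear.has_vector_derivative[OF _ assms, of "\<lambda>z. fst z $ i"]
    bounded_linear_compose[OF bounded_linear_vec_nth[of i] bounded_linear_fst]
  by (simp add: o_def has_real_derivative_iff_has_vector_derivative)

lemma has_real_derivative_snd_nth:
  fixes f :: "real \<Rightarrow> (real^'n) \<times> (real^'m)"
  assumes "(f has_vector_derivative v) F"
  shows "((\<lambda>t. snd (f t) $ i) has_real_derivative snd v $ i) F"
  using bounded_linear.has_vector_derivative[OF _ assms, of "\<lambda>z. snd z $ i"]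
    bounded_linear_compose[OF bounded_linear_vec_nth[of i] bounded_linear_snd]
  by (simp add: o_def has_real_derivative_iff_has_vector_derivative)

lemma at_within_Ici_eq_at: "(t::real) > 0 \<Longrightarrow> at t within {0..} = at t"
  by (rule at_within_nhd[where S="{0<..}"]) auto

lemma nondecreasing_if_derivative_nonneg:
  fixes f :: "real \<Rightarrow> real"
  assumes deriv: "\<And>r. r \<ge> 0 \<Longrightarrow> (f has_real_derivative f' r) (at r within {0..})"
    and nonneg: "\<And>r. s < r \<Longrightarrow> r < t \<Longrightarrow> f' r \<ge> 0"
    and "0 \<le> s" "s \<le> t"
  shows "f s \<le> f t"
proof (rule DERIV_nonneg_imp_increasing_open[OF \<open>s \<le> t\<close>])
  show "continuous_on {s..t} f"
    using \<open>0 \<le> s\<close> by (intro DERIV_continuous_on[of _ _ f']) (auto intro!: DERIV_subset[OF deriv])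
  show "\<exists>y. DERIV f r :> y \<and> y \<ge> 0" if "s < r" "r < t" for r
    using deriv[of r] nonneg[OF that] at_within_Ici_eq_at[of r] that \<open>0 \<le> s\<close> by auto
qed

lemma nonincreasing_if_derivative_nonpos:
  fixes f :: "real \<Rightarrow> real"
  assumes deriv: "\<And>r. r \<ge> 0 \<Longrightarrow> (f has_real_derivative f' r) (at r within {0..})"
    and nonpos: "\<And>r. s < r \<Longrightarrow> r < t \<Longrightarrow> f' r \<le> 0"
    and "0 \<le> s" "s \<le> t"
  shows "f t \<le> f s"
  using nondecreasing_if_derivative_nonneg[of "\<lambda>r. - f r" "\<lambda>r. - f' r" s t] assms
  by (auto intro: DERIV_minus)

lemma derivative_barrier_nonneg:
  fixes f :: "real \<Rightarrow> real"
  assumes deriv: "\<And>t. t \<ge> 0 \<Longrightarrow> (f has_real_derivative f' t) (at t within {0..})"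
    and inward: "\<And>t. t > 0 \<Longrightarrow> f t < 0 \<Longrightarrow> f' t \<ge> 0"
    and "f 0 \<ge> 0" "T \<ge> 0"
  shows "f T \<ge> 0"
proof (rule ccontr)
  assume neg: "\<not> f T \<ge> 0"
  define S where "S = {0..T} \<inter> f -` {0..}"
  have "continuous_on {0..T} f"
    by (intro DERIV_continuous_on[of _ _ f']) (auto intro!: DERIV_subset[OF deriv])
  then have "closed S"
    unfolding S_def by (rule continuous_closed_preimage) auto
  moreover have "bdd_above S" "0 \<in> S"
    using \<open>f 0 \<ge> 0\<close> \<open>T \<ge> 0\<close> unfolding S_def by auto
  ultimately have s: "Sup S \<in> S"
    using closed_contains_Sup by blast
  have negative_after: "f r < 0" if "Sup S < r" "r \<le> T" for r
    using cSup_upper[OF _ \<open>bdd_above S\<close>, of r] that s unfolding S_def by force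
  have "0 \<le> Sup S" "Sup S < T"
    using s neg unfolding S_def by (auto simp: le_less)
  moreover have "0 \<le> f' r" if "Sup S < r" "r < T" for r
    using that \<open>0 \<le> Sup S\<close> by (intro inward negative_after) auto
  ultimately have "f (Sup S) \<le> f T"
    by (intro nondecreasing_if_derivative_nonneg[OF deriv]) auto
  with s neg show False
    unfolding S_def by auto
qed

lemma exp_lower_bound_if_derivative_ge:
  fixes f :: "real \<Rightarrow> real"
  assumes deriv: "\<And>t. t \<ge> 0 \<Longrightarrow> (f has_real_derivative f' t) (at t within {0..})"
    and ge: "\<And>t. t \<ge> 0 \<Longrightarrow> f' t \<ge> - c * f t"
    and "t \<ge> 0"
  shows "f 0 * exp (- c * t) \<le> f t"
proof -
  have "f 0 * exp (c * 0) \<le> f t * exp (c * t)"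
  proof (rule nondecreasing_if_derivative_nonneg[where f = "\<lambda>r. f r * exp (c * r)"
        and f' = "\<lambda>r. (f' r + c * f r) * exp (c * r)" and s = 0])
    show "((\<lambda>r. f r * exp (c * r)) has_real_derivative (f' r + c * f r) * exp (c * r))
        (at r within {0..})" if "r \<ge> 0" for r
    proof -
      have "((\<lambda>r. exp (c * r)) has_real_derivative exp (c * r) * c) (at r within {0..})"
        by (auto intro!: derivative_eq_intros)
      from DERIV_mult[OF deriv[OF that] this] show ?thesis
        by (simp add: algebra_simps)
    qed
    show "(f' r + c * f r) * exp (c * r) \<ge> 0" if "0 < r" for r
      using ge[of r] that by simp
  qed (use \<open>t \<ge> 0\<close> in auto)
  then have "f 0 * exp (- c * t) \<le> f t * exp (c * t) * exp (- c * t)"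
    by (intro mult_right_mono) auto
  then show ?thesis
    by (simp add: mult.assoc flip: exp_add)
qed

lemma tendsto_Inf_if_nonincreasing:
  fixes f :: "real \<Rightarrow> real"
  assumes mono: "\<And>s t. 0 \<le> s \<Longrightarrow> s \<le> t \<Longrightarrow> f t \<le> f s"
    and bdd: "\<And>t. 0 \<le> t \<Longrightarrow> c \<le> f t"
  shows "(f \<longlongrightarrow> Inf (f ` {0..})) at_top"
proof (rule order_tendstoI)
  fix a assume "a < Inf (f ` {0..})"
  moreover have "Inf (f ` {0..}) \<le> f t" if "t \<ge> 0" for t
    using that bdd by (intro cInf_lower bdd_belowI2) auto
  ultimately show "eventually (\<lambda>t. a < f t) at_top"
    unfolding eventually_at_top_linorder by (intro exI[of _ 0]) force
next
  fix a assume "Inf (f ` {0..}) < a"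
  then obtain t0 where "t0 \<ge> 0" "f t0 < a"
    using cInf_lessD[of "f ` {0..}" a] by auto
  then have "f t < a" if "t \<ge> t0" for t
    using mono[OF \<open>t0 \<ge> 0\<close> that] by linarith
  then show "eventually (\<lambda>t. f t < a) at_top"
    unfolding eventually_at_top_linorder by blast
qed

lemma derivative_limit_nonneg_if_bdd_below:
  fixes f :: "real \<Rightarrow> real"
  assumes deriv: "\<And>t. t \<ge> 0 \<Longrightarrow> (f has_real_derivative f' t) (at t within {0..})"
    and bdd: "\<And>t. 0 \<le> t \<Longrightarrow> c \<le> f t"
    and lim: "(f' \<longlongrightarrow> l) at_top"
  shows "l \<ge> 0"
proof (rule ccontr)
  assume "\<not> l \<ge> 0"
  then have "l / 2 < 0" by simp
  then obtain T0 where T0: "\<And>t. t \<ge> T0 \<Longrightarrow> f' t < l / 2"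
    using order_tendstoD(2)[OF lim, of "l / 2"] unfolding eventually_at_top_linorder by auto
  define T where "T = max T0 0"
  define t where "t = T + (f T - c + 1) / (- l / 2)"
  have "T \<ge> 0"
    unfolding T_def by simp
  moreover have "(f T - c + 1) / (- l / 2) \<ge> 0"
    using bdd[OF \<open>T \<ge> 0\<close>] \<open>l / 2 < 0\<close> by (intro divide_nonneg_pos) auto
  ultimately have "T \<ge> 0" "T \<le> t"
    unfolding t_def by auto
  have "f t - l / 2 * t \<le> f T - l / 2 * T"
  proof (rule nonincreasing_if_derivative_nonpos[where f = "\<lambda>r. f r - l / 2 * r"
        and f' = "\<lambda>r. f' r - l / 2" and s = T])
    show "((\<lambda>r. f r - l / 2 * r) has_real_derivative f' r - l / 2) (at r within {0..})"
      if "r \<ge> 0" for r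
      using DERIV_diff[OF deriv[OF that] DERIV_cmult_Id[of "l / 2"]] by simp
    show "f' r - l / 2 \<le> 0" if "T < r" for r
      using T0[of r] that unfolding T_def by simp
  qed fact+
  moreover have "l / 2 * (t - T) = c - 1 - f T"
    using \<open>l / 2 < 0\<close> unfolding t_def by (simp add: field_simps)
  ultimately have "f t \<le> c - 1"
    using right_diff_distrib[of "l / 2" t T] by linarith
  with bdd[of t] \<open>T \<ge> 0\<close> \<open>T \<le> t\<close> show False
    by simp
qed

section \<open>Lipschitz estimates\<close>

lemma lipschitz_on_mult_compact:
  fixes f g :: "'a::metric_space \<Rightarrow> real"
  assumes "compact U" "Lf-lipschitz_on U f" "Lg-lipschitz_on U g"
  shows "\<exists>L. L-lipschitz_on U (\<lambda>x. f x * g x)"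
proof -
  have "bounded (f ` U)" "bounded (g ` U)"
    using assms by (auto intro!: compact_imp_bounded compact_continuous_image lipschitz_on_continuous_on)
  then obtain Bf Bg where "Bf > 0" "Bg > 0"
    and Bf: "\<And>x. x \<in> U \<Longrightarrow> \<bar>f x\<bar> \<le> Bf"
    and Bg: "\<And>x. x \<in> U \<Longrightarrow> \<bar>g x\<bar> \<le> Bg"
    unfolding bounded_pos by (auto simp: real_norm_def)
  have "dist (f x * g x) (f y * g y) \<le> (Bf * Lg + Bg * Lf) * dist x y" if "x \<in> U" "y \<in> U" for x y
  proof -
    have "dist (f x * g x) (f y * g y) = \<bar>f x * (g x - g y) + g y * (f x - f y)\<bar>"
      by (simp add: dist_real_def algebra_simps)
    also have "\<dots> \<le> \<bar>f x\<bar> * dist (g x) (g y) + \<bar>g y\<bar> * dist (f x) (f y)"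
      by (metis abs_mult abs_triangle_ineq dist_real_def)
    also have "\<dots> \<le> Bf * (Lg * dist x y) + Bg * (Lf * dist x y)"
      using that assms(2,3) Bf Bg
      by (intro add_mono mult_mono lipschitz_onD) (auto intro: order_trans[OF abs_ge_zero])
    finally show ?thesis
      by (simp add: algebra_simps)
  qed
  moreover have "0 \<le> Bf * Lg + Bg * Lf"
    using \<open>Bf > 0\<close> \<open>Bg > 0\<close> lipschitz_on_nonneg[OF assms(2)] lipschitz_on_nonneg[OF assms(3)]
    by simp
  ultimately show ?thesis
    by (auto intro!: lipschitz_onI)
qed

lemma lipschitz_on_sum:
  fixes f :: "'i \<Rightarrow> 'a::metric_space \<Rightarrow> 'b::real_normed_vector"
  assumes "finite I" "\<And>i. i \<in> I \<Longrightarrow> \<exists>L. L-lipschitz_on U (f i)"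
  shows "\<exists>L. L-lipschitz_on U (\<lambda>x. \<Sum>i\<in>I. f i x)"
  using assms
proof (induction I rule: finite_induct)
  case empty
  then show ?case
    using lipschitz_on_constant by auto
next
  case (insert i I)
  then obtain Li L where "Li-lipschitz_on U (f i)" "L-lipschitz_on U (\<lambda>x. \<Sum>i\<in>I. f i x)"
    by blast
  from lipschitz_on_add[OF this] show ?case
    using insert.hyps by auto
qed

lemma lipschitz_on_vec_lambda:
  fixes f :: "'a::metric_space \<Rightarrow> 'n::finite \<Rightarrow> real"
  assumes "\<And>i. \<exists>L. L-lipschitz_on U (\<lambda>x. f x i)"
  shows "\<exists>L. L-lipschitz_on U (\<lambda>x. \<chi> i. f x i)"
proof -
  obtain L where L: "\<And>i. (L i)-lipschitz_on U (\<lambda>x. f x i)"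
    using assms by metis
  have "dist (\<chi> i. f x i) (\<chi> i. f y i) \<le> (\<Sum>i\<in>UNIV. L i) * dist x y" if "x \<in> U" "y \<in> U" for x y
  proof -
    have "dist (\<chi> i. f x i) (\<chi> i. f y i) \<le> (\<Sum>i\<in>UNIV. dist (f x i) (f y i))"
      using norm_le_l1_cart[of "(\<chi> i. f x i) - (\<chi> i. f y i)"] by (simp add: dist_norm dist_real_def)
    also have "\<dots> \<le> (\<Sum>i\<in>UNIV. L i * dist x y)"
      using L that by (intro sum_mono lipschitz_onD)
    finally show ?thesis
      by (simp add: sum_distrib_right)
  qed
  moreover have "0 \<le> (\<Sum>i\<in>UNIV. L i)"
    using L lipschitz_on_nonneg by (intro sum_nonneg) blast
  ultimately show ?thesis
    by (auto intro!: lipschitz_onI)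
qed

lemma lipschitz_on_fst_nth: "1-lipschitz_on U (\<lambda>z. fst z $ i)"
  by (rule lipschitz_onI) (auto intro: order_trans[OF dist_vec_nth_le dist_fst_le])

lemma lipschitz_on_snd_nth: "1-lipschitz_on U (\<lambda>z. snd z $ i)"
  by (rule lipschitz_onI) (auto intro: order_trans[OF dist_vec_nth_le dist_snd_le])

lemma lipschitz_on_if_bounded_derivative:
  fixes f :: "'a::real_normed_vector \<Rightarrow> 'b::real_normed_vector"
  assumes "convex S" "compact S"
    and "\<And>x. x \<in> S \<Longrightarrow> (f has_derivative blinfun_apply (f' x)) (at x within S)"
    and "continuous_on S f'"
  shows "\<exists>L. L-lipschitz_on S f"
proof -
  obtain B where "B > 0" and B: "\<And>x. x \<in> S \<Longrightarrow> norm (f' x) \<le> B"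
    using compact_imp_bounded[OF compact_continuous_image[OF assms(4,2)]]
    unfolding bounded_pos by auto
  have "dist (f x) (f y) \<le> B * dist x y" if "x \<in> S" "y \<in> S" for x y
    using differentiable_bound[OF assms(1), of f "\<lambda>x. blinfun_apply (f' x)" B x y] assms(3) B that
    by (auto simp: dist_norm norm_blinfun.rep_eq norm_minus_commute)
  with \<open>B > 0\<close> show ?thesis
    by (intro exI[of _ B] lipschitz_onI) auto
qed

section \<open>Global solutions of bounded Lipschitz autonomous equations\<close>

lemma integral_exp_mult:
  fixes r \<tau> :: real
  assumes "r \<noteq> 0" "\<tau> \<ge> 0"
  shows "integral {0..\<tau>} (\<lambda>s. exp (r * s)) = (exp (r * \<tau>) - 1) / r"
proof -
  have "((\<lambda>s. exp (r * s) / r) has_vector_derivative exp (r * s)) (at s within {0..\<tau>})" for s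
    using assms(1) unfolding has_real_derivative_iff_has_vector_derivative[symmetric]
    by (auto intro!: derivative_eq_intros)
  from fundamental_theorem_of_calculus[OF assms(2) this] show ?thesis
    by (simp add: integral_unique diff_divide_distrib)
qed

locale bounded_lipschitz_field =
  fixes G :: "'a::banach \<Rightarrow> 'a" and L M :: real
  assumes lipschitz: "L-lipschitz_on UNIV G"
    and bounded: "\<And>z. norm (G z) \<le> M"
begin

lemma continuous_on_field: "continuous_on S G"
  using lipschitz_on_continuous_on[OF lipschitz] by (rule continuous_on_subset) simp

definition picard :: "'a \<Rightarrow> (real \<Rightarrow> 'a) \<Rightarrow> real \<Rightarrow> 'a" where
  "picard z0 u t = z0 + integral {0..t} (\<lambda>s. G (u s))"

lemma picard_has_vector_derivative:
  assumes u: "continuous_on {0..} u" and t: "t \<ge> 0"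
  shows "(picard z0 u has_vector_derivative G (u t)) (at t within {0..})"
proof -
  have "continuous_on {0..t + 1} (\<lambda>s. G (u s))"
    using continuous_on_subset[OF u] by (intro continuous_on_compose2[OF continuous_on_field]) auto
  then have "((\<lambda>s. integral {0..s} (\<lambda>s. G (u s))) has_vector_derivative G (u t))
      (at t within {0..t + 1})"
    using t by (intro integral_has_vector_derivative) auto
  moreover have "at t within {0..t + 1} = at t within {0..}"
    by (rule at_within_nhd[where S = "{..<t + 1}"]) auto
  ultimately show ?thesis
    unfolding picard_def by (subst add.commute) (simp add: has_vector_derivative_add_const)
qed

lemma continuous_on_picard: "continuous_on {0..} u \<Longrightarrow> continuous_on {0..} (picard z0 u)"
  by (rule continuous_on_vector_derivative) (auto intro: picard_has_vector_derivative)

lemma norm_picard_le: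
  assumes u: "continuous_on {0..} u" and t: "t \<ge> 0"
  shows "norm (picard z0 u t) \<le> norm z0 + M * t"
proof -
  have "norm (integral {0..t} (\<lambda>s. G (u s))) \<le> integral {0..t} (\<lambda>s. M)"
    using continuous_on_subset[OF u]
    by (intro integral_norm_bound_integral integrable_continuous_real bounded
        continuous_on_compose2[OF continuous_on_field]) auto
  then have "norm (integral {0..t} (\<lambda>s. G (u s))) \<le> M * t"
    using t by (simp add: mult.commute)
  then show ?thesis
    unfolding picard_def using norm_triangle_ineq[of z0 "integral {0..t} (\<lambda>s. G (u s))"]
    by linarith
qed

text \<open>Bielecki's trick: after the substitution u t = exp (rate t) w t, the Picard operator becomes
  a contraction with constant L / rate < 1/2 on the bounded continuous functions w on the whole
  half-line; damp and undamp pass between u and w.\<close>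

definition rate :: real where "rate = 2 * L + 1"

lemma rate_pos: "rate > 0"
  using lipschitz_on_nonneg[OF lipschitz] unfolding rate_def by simp

definition damp :: "(real \<Rightarrow> 'a) \<Rightarrow> real \<Rightarrow> 'a" where
  "damp u t = exp (- rate * max 0 t) *\<^sub>R u (max 0 t)"

definition undamp :: "(real \<Rightarrow> 'a) \<Rightarrow> real \<Rightarrow> 'a" where
  "undamp w t = exp (rate * t) *\<^sub>R w t"

lemma damp_picard_bcontfun:
  assumes u: "continuous_on {0..} u"
  shows "damp (picard z0 u) \<in> bcontfun"
proof (rule bcontfun_normI)
  show "continuous_on UNIV (damp (picard z0 u))"
    unfolding damp_def
    by (intro continuous_intros continuous_on_compose2[OF continuous_on_picard[OF u]]) auto
  fix t :: real
  define \<tau> where "\<tau> = max 0 t"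
  have "\<tau> \<ge> 0" "M \<ge> 0"
    using norm_ge_zero[of "G 0"] bounded[of 0] unfolding \<tau>_def by linarith+
  have "rate * \<tau> \<le> exp (rate * \<tau>)"
    using exp_ge_add_one_self[of "rate * \<tau>"] by linarith
  then have "exp (- rate * \<tau>) * \<tau> \<le> 1 / rate"
    using rate_pos by (simp add: exp_minus field_simps)
  have "norm (damp (picard z0 u) t) = exp (- rate * \<tau>) * norm (picard z0 u \<tau>)"
    unfolding damp_def \<tau>_def by simp
  also have "\<dots> \<le> exp (- rate * \<tau>) * (norm z0 + M * \<tau>)"
    using norm_picard_le[OF u \<open>\<tau> \<ge> 0\<close>] by (intro mult_left_mono) auto
  also have "\<dots> = exp (- rate * \<tau>) * norm z0 + M * (exp (- rate * \<tau>) * \<tau>)"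
    by (simp add: algebra_simps)
  also have "\<dots> \<le> 1 * norm z0 + M * (1 / rate)"
    using \<open>\<tau> \<ge> 0\<close> \<open>M \<ge> 0\<close> rate_pos \<open>exp (- rate * \<tau>) * \<tau> \<le> 1 / rate\<close>
    by (intro add_mono mult_right_mono mult_left_mono) auto
  finally show "norm (damp (picard z0 u) t) \<le> norm z0 + M / rate"
    by simp
qed

lemma continuous_on_undamp: "continuous_on UNIV (undamp (apply_bcontfun w))"
  unfolding undamp_def by (intro continuous_intros continuous_on_apply_bcontfun)

definition picard_step :: "'a \<Rightarrow> (real \<Rightarrow>\<^sub>C 'a) \<Rightarrow> real \<Rightarrow>\<^sub>C 'a" where
  "picard_step z0 w = Bcontfun (damp (picard z0 (undamp (apply_bcontfun w))))"

lemma picard_step_apply: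
  "apply_bcontfun (picard_step z0 w) = damp (picard z0 (undamp (apply_bcontfun w)))"
  unfolding picard_step_def
  using damp_picard_bcontfun continuous_on_subset[OF continuous_on_undamp]
  by (auto intro!: Bcontfun_inverse)

lemma norm_field_undamp_diff_le:
  "norm (G (undamp (apply_bcontfun v) s) - G (undamp (apply_bcontfun w) s))
    \<le> L * dist v w * exp (rate * s)"
proof -
  have "norm (G (undamp v s) - G (undamp w s)) \<le> L * norm (undamp v s - undamp w s)"
    by (rule lipschitz_on_normD[OF lipschitz]) auto
  also have "\<dots> = L * (exp (rate * s) * dist (v s) (w s))"
    by (simp add: undamp_def dist_norm flip: scaleR_right_diff_distrib)
  also have "\<dots> \<le> L * (exp (rate * s) * dist v w)"
    using lipschitz_on_nonneg[OF lipschitz] by (intro mult_left_mono dist_bounded) auto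
  finally show ?thesis
    by (simp add: algebra_simps)
qed

lemma picard_step_contraction:
  "dist (picard_step z0 v) (picard_step z0 w) \<le> 1/2 * dist v w"
proof (rule dist_bound)
  fix t :: real
  define \<tau> where "\<tau> = max 0 t"
  define D where "D = dist v w"
  let ?g = "\<lambda>w s. G (undamp (apply_bcontfun w) s)"
  have "\<tau> \<ge> 0" "L \<ge> 0" "D \<ge> 0"
    using lipschitz_on_nonneg[OF lipschitz] unfolding \<tau>_def D_def by auto
  have int: "?g w integrable_on {0..\<tau>}" for w
    by (intro integrable_continuous_real continuous_on_compose2[OF continuous_on_field]
        continuous_on_subset[OF continuous_on_undamp]) auto
  have "norm (?g v s - ?g w s) \<le> L * D * exp (rate * s)" for s
    unfolding D_def by (rule norm_field_undamp_diff_le)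
  then have "norm (integral {0..\<tau>} (\<lambda>s. ?g v s - ?g w s))
      \<le> integral {0..\<tau>} (\<lambda>s. L * D * exp (rate * s))"
    by (intro integral_norm_bound_integral integrable_diff int integrable_continuous_real
        continuous_intros)
  also have "\<dots> = L * D * (exp (rate * \<tau>) - 1) / rate"
    using integral_exp_mult[of rate \<tau>] rate_pos \<open>\<tau> \<ge> 0\<close> by simp
  finally have bound: "norm (integral {0..\<tau>} (\<lambda>s. ?g v s - ?g w s))
      \<le> L * D * (exp (rate * \<tau>) - 1) / rate" .
  have "dist (picard_step z0 v t) (picard_step z0 w t)
      = exp (- rate * \<tau>) * norm (integral {0..\<tau>} (\<lambda>s. ?g v s - ?g w s))"
    unfolding picard_step_apply damp_def picard_def \<tau>_def[symmetric] dist_norm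
    by (simp add: integral_diff[OF int int] flip: scaleR_right_diff_distrib)
  also have "\<dots> \<le> exp (- rate * \<tau>) * (L * D * (exp (rate * \<tau>) - 1) / rate)"
    using bound by (intro mult_left_mono) auto
  also have "\<dots> = L * D * (1 - exp (- rate * \<tau>)) / rate"
    by (simp add: field_simps exp_minus)
  also have "\<dots> \<le> L * D / rate"
    using \<open>L \<ge> 0\<close> \<open>D \<ge> 0\<close> rate_pos by (intro divide_right_mono) (auto simp: mult_left_le)
  also have "\<dots> \<le> 1/2 * D"
    using \<open>L \<ge> 0\<close> \<open>D \<ge> 0\<close> rate_pos unfolding rate_def by (simp add: field_simps)
  finally show "dist (picard_step z0 v t) (picard_step z0 w t) \<le> 1/2 * dist v w"
    unfolding D_def .
qed

lemma picard_step_unique_fixed_point: "\<exists>!w. picard_step z0 w = w"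
  using picard_step_contraction by (intro banach_fix_type[of "1/2"]) auto

lemma fixed_point_solves_picard:
  assumes "picard_step z0 w = w" "t \<ge> 0"
  shows "picard z0 (undamp w) t = undamp w t"
proof -
  have "apply_bcontfun w t = damp (picard z0 (undamp w)) t"
    using picard_step_apply[of z0 w] assms(1) by simp
  also have "\<dots> = exp (- rate * t) *\<^sub>R picard z0 (undamp w) t"
    using assms(2) by (simp add: damp_def)
  finally show ?thesis
    by (simp add: undamp_def flip: exp_add)
qed

lemma damp_solution_eq:
  assumes "\<And>t. t \<ge> 0 \<Longrightarrow> u t = picard z0 u t"
  shows "damp u = damp (picard z0 u)"
  unfolding damp_def by (auto simp: assms)

lemma damp_fixed_point:
  assumes u: "continuous_on {0..} u" and eq: "\<And>t. t \<ge> 0 \<Longrightarrow> u t = picard z0 u t"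
  shows "picard_step z0 (Bcontfun (damp u)) = Bcontfun (damp u)"
proof -
  have "apply_bcontfun (Bcontfun (damp u)) = damp u"
    using damp_picard_bcontfun[OF u] by (simp add: Bcontfun_inverse damp_solution_eq[OF eq])
  moreover have "undamp (damp u) s = u s" if "s \<ge> 0" for s
    using that by (simp add: undamp_def damp_def flip: exp_add)
  then have "picard z0 (undamp (damp u)) = picard z0 u"
    unfolding picard_def by (intro ext arg_cong2[where f = "(+)"] integral_cong) auto
  ultimately show ?thesis
    unfolding picard_step_def by (simp add: damp_solution_eq[OF eq, symmetric])
qed

lemma solution_eq_picard:
  assumes deriv: "\<And>t. t \<ge> 0 \<Longrightarrow> (u has_vector_derivative G (u t)) (at t within {0..})"
    and t: "t \<ge> 0"
  shows "u t = picard (u 0) u t"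
proof -
  have "((\<lambda>s. G (u s)) has_integral u t - u 0) {0..t}"
    using deriv by (intro fundamental_theorem_of_calculus[OF t])
      (auto intro!: has_vector_derivative_within_subset[OF deriv])
  then show ?thesis
    unfolding picard_def by (simp add: integral_unique)
qed

theorem solution_exists:
  "\<exists>u. u 0 = z0 \<and> (\<forall>t\<ge>0. (u has_vector_derivative G (u t)) (at t within {0..}))"
proof -
  obtain w where w: "picard_step z0 w = w"
    using picard_step_unique_fixed_point by blast
  define u where "u = undamp (apply_bcontfun w)"
  have u: "continuous_on {0..} u"
    unfolding u_def using continuous_on_undamp by (rule continuous_on_subset) simp
  have eq: "picard z0 u t = u t" if "t \<ge> 0" for t
    unfolding u_def using fixed_point_solves_picard[OF w that] .
  have "(u has_vector_derivative G (u t)) (at t within {0..})" if "t \<ge> 0" for t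
    by (rule has_vector_derivative_transform[OF _ _ picard_has_vector_derivative[OF u that, of z0]])
      (use that eq in auto)
  moreover have "u 0 = z0"
    using eq[of 0] unfolding picard_def by simp
  ultimately show ?thesis
    by blast
qed

theorem solution_unique:
  assumes u: "\<And>t. t \<ge> 0 \<Longrightarrow> (u has_vector_derivative G (u t)) (at t within {0..})"
    and v: "\<And>t. t \<ge> 0 \<Longrightarrow> (v has_vector_derivative G (v t)) (at t within {0..})"
    and "u 0 = v 0" "t \<ge> 0"
  shows "u t = v t"
proof -
  have cont: "continuous_on {0..} u" "continuous_on {0..} v"
    using u v by (auto intro!: continuous_on_vector_derivative)
  have eq: "u t = picard (u 0) u t" "v t = picard (u 0) v t" if "t \<ge> 0" for t
    using solution_eq_picard[OF u that] solution_eq_picard[OF v that] \<open>u 0 = v 0\<close> by auto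
  have "picard_step (u 0) (Bcontfun (damp u)) = Bcontfun (damp u)"
    "picard_step (u 0) (Bcontfun (damp v)) = Bcontfun (damp v)"
    using eq by (intro damp_fixed_point cont; blast)+
  then have "Bcontfun (damp u) = Bcontfun (damp v)"
    using picard_step_unique_fixed_point[of "u 0"] by auto
  moreover have "damp u \<in> bcontfun" "damp v \<in> bcontfun"
    using damp_picard_bcontfun[OF cont(1)] damp_picard_bcontfun[OF cont(2)]
    by (simp_all add: damp_solution_eq[OF eq(1)] damp_solution_eq[OF eq(2)])
  ultimately have "damp u t = damp v t"
    by (metis Bcontfun_inverse)
  with \<open>t \<ge> 0\<close> show ?thesis
    by (simp add: damp_def)
qed

end

section \<open>The network SIR system\<close>

lemma clamp_inner_Basis:
  fixes a b x :: "'a::euclidean_space"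
  assumes "\<And>k. k \<in> Basis \<Longrightarrow> a \<bullet> k \<le> b \<bullet> k" "i \<in> Basis"
  shows "clamp a b x \<bullet> i = max (a \<bullet> i) (min (b \<bullet> i) (x \<bullet> i))"
  using assms by (auto simp: clamp_def inner_sum_left_Basis)

lemma sir_cube_eq_cbox: "(sir_cube :: ((real^'n) \<times> (real^'n)) set) = cbox (0, 0) (1, 1)"
  unfolding sir_cube_def cbox_Pair_eq by (auto simp: mem_box_cart)

definition clamp_cube :: "(real^'n) \<times> (real^'n) \<Rightarrow> (real^'n) \<times> (real^'n)" where
  "clamp_cube = clamp (0, 0) (1, 1)"

lemma clamp_cube_nth:
  fixes z :: "(real^'n) \<times> (real^'n)"
  shows "fst (clamp_cube z) $ i = max 0 (min 1 (fst z $ i))"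
  "snd (clamp_cube z) $ i = max 0 (min 1 (snd z $ i))"
proof -
  have le: "(0, 0) \<bullet> k \<le> ((1, 1) :: (real^'n) \<times> (real^'n)) \<bullet> k" if "k \<in> Basis" for k
    using that by (auto simp: Basis_prod_def inner_Pair Basis_vec_def inner_axis)
  have basis: "(axis i 1, 0) \<in> (Basis :: ((real^'n) \<times> (real^'n)) set)"
    "(0, axis i 1) \<in> (Basis :: ((real^'n) \<times> (real^'n)) set)"
    by (auto simp: Basis_prod_def Basis_vec_def)
  have nth: "fst w $ i = w \<bullet> (axis i 1, 0)" "snd w $ i = w \<bullet> (0, axis i 1)"
    for w :: "(real^'n) \<times> (real^'n)"
    by (cases w; simp add: inner_Pair inner_axis)+
  show "fst (clamp_cube z) $ i = max 0 (min 1 (fst z $ i))"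
    "snd (clamp_cube z) $ i = max 0 (min 1 (snd z $ i))"
    unfolding nth clamp_cube_def using clamp_inner_Basis[OF le basis(1)] clamp_inner_Basis[OF le basis(2)]
    by (simp_all add: inner_Pair inner_axis)
qed

lemma compact_sir_cube: "compact sir_cube"
  by (simp add: sir_cube_eq_cbox)

lemma convex_sir_cube: "convex sir_cube"
  by (simp add: sir_cube_eq_cbox)

lemma clamp_cube_in_sir_cube: "clamp_cube z \<in> sir_cube"
  unfolding sir_cube_def by (simp add: clamp_cube_nth)

lemma clamp_cube_id: "z \<in> sir_cube \<Longrightarrow> clamp_cube z = z"
  unfolding sir_cube_eq_cbox clamp_cube_def by simp

lemma lipschitz_clamp_cube: "1-lipschitz_on U clamp_cube"
  unfolding clamp_cube_def by (rule lipschitz_onI) (auto intro: dist_clamps_le_dist_args)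

locale sir_system =
  fixes A :: "(real^'n) \<times> (real^'n) \<Rightarrow> real^'n^'n"
    and A' :: "(real^'n) \<times> (real^'n) \<Rightarrow> ((real^'n) \<times> (real^'n)) \<Rightarrow>\<^sub>L (real^'n^'n)"
    and \<gamma> :: real
  assumes gamma_pos: "\<gamma> > 0"
    and A_nonneg: "\<forall>z\<in>sir_cube. \<forall>i j. 0 \<le> A z $ i $ j"
    and A_deriv: "\<forall>z\<in>sir_cube. (A has_derivative blinfun_apply (A' z)) (at z within sir_cube)"
    and A'_cont: "continuous_on sir_cube A'"
begin

definition force_of_infection :: "(real^'n) \<times> (real^'n) \<Rightarrow> 'n \<Rightarrow> real" where
  "force_of_infection z i = (\<Sum>j\<in>UNIV. A z $ i $ j * snd z $ j)"

lemma sir_field_eq: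
  "sir_field A \<gamma> z =
    ((\<chi> i. - fst z $ i * force_of_infection z i),
     (\<chi> i. fst z $ i * force_of_infection z i - \<gamma> * snd z $ i))"
  by (simp add: sir_field_def force_of_infection_def)

lemma sir_field_nth:
  "fst (sir_field A \<gamma> z) $ i = - fst z $ i * force_of_infection z i"
  "snd (sir_field A \<gamma> z) $ i = fst z $ i * force_of_infection z i - \<gamma> * snd z $ i"
  by (simp_all add: sir_field_eq)

lemma force_of_infection_nonneg:
  assumes "z \<in> sir_cube"
  shows "0 \<le> force_of_infection z i"
proof -
  have "0 \<le> A z $ i $ j" "0 \<le> snd z $ j" for j
    using A_nonneg assms unfolding sir_cube_def by blast+
  then show ?thesis
    unfolding force_of_infection_def by (simp add: sum_nonneg)
qed

lemma lipschitz_force_of_infection: "\<exists>L. L-lipschitz_on sir_cube (\<lambda>z. force_of_infection z i)"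
proof -
  obtain LA where LA: "LA-lipschitz_on sir_cube A"
    using lipschitz_on_if_bounded_derivative[OF convex_sir_cube compact_sir_cube _ A'_cont] A_deriv
    by blast
  have "1-lipschitz_on (A ` sir_cube) (\<lambda>M. M $ i $ j)" for j
    by (rule lipschitz_onI) (auto intro: order_trans[OF dist_vec_nth_le dist_vec_nth_le])
  from lipschitz_on_compose2[OF LA this]
  have "\<exists>L. L-lipschitz_on sir_cube (\<lambda>z. A z $ i $ j * snd z $ j)" for j
    by (intro lipschitz_on_mult_compact[OF compact_sir_cube _ lipschitz_on_snd_nth]) simp
  then show ?thesis
    unfolding force_of_infection_def by (intro lipschitz_on_sum) auto
qed

lemma force_of_infection_bounded: "\<exists>B. \<forall>z\<in>sir_cube. force_of_infection z i \<le> B"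
proof -
  have "continuous_on sir_cube (\<lambda>z. force_of_infection z i)"
    using lipschitz_force_of_infection lipschitz_on_continuous_on by blast
  then have "bounded ((\<lambda>z. force_of_infection z i) ` sir_cube)"
    by (intro compact_imp_bounded compact_continuous_image compact_sir_cube)
  then show ?thesis
    unfolding bounded_iff by (auto dest: abs_le_D1)
qed

lemma lipschitz_sir_field: "\<exists>L. L-lipschitz_on sir_cube (sir_field A \<gamma>)"
proof -
  have infection: "\<exists>L. L-lipschitz_on sir_cube (\<lambda>z. fst z $ i * force_of_infection z i)" for i
  proof -
    obtain L where "L-lipschitz_on sir_cube (\<lambda>z. force_of_infection z i)"
      using lipschitz_force_of_infection by blast
    then show ?thesis
      by (rule lipschitz_on_mult_compact[OF compact_sir_cube lipschitz_on_fst_nth])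
  qed
  have "\<exists>L. L-lipschitz_on sir_cube (\<lambda>z. - fst z $ i * force_of_infection z i)" for i
  proof -
    obtain L where "L-lipschitz_on sir_cube (\<lambda>z. fst z $ i * force_of_infection z i)"
      using infection by blast
    from lipschitz_on_minus[OF this] show ?thesis
      by (intro exI[of _ L]) simp
  qed
  then obtain L1 where L1: "L1-lipschitz_on sir_cube (\<lambda>z. \<chi> i. - fst z $ i * force_of_infection z i)"
    using lipschitz_on_vec_lambda[of sir_cube "\<lambda>z i. - fst z $ i * force_of_infection z i"] by blast
  have "\<exists>L. L-lipschitz_on sir_cube (\<lambda>z. fst z $ i * force_of_infection z i - \<gamma> * snd z $ i)" for i
  proof -
    obtain L where "L-lipschitz_on sir_cube (\<lambda>z. fst z $ i * force_of_infection z i)"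
      using infection by blast
    from lipschitz_on_diff[OF this lipschitz_on_cmult_real[OF lipschitz_on_snd_nth]] show ?thesis
      by blast
  qed
  then obtain L2
    where L2: "L2-lipschitz_on sir_cube (\<lambda>z. \<chi> i. fst z $ i * force_of_infection z i - \<gamma> * snd z $ i)"
    using lipschitz_on_vec_lambda[of sir_cube "\<lambda>z i. fst z $ i * force_of_infection z i - \<gamma> * snd z $ i"]
    by blast
  from lipschitz_on_Pair[OF L1 L2] show ?thesis
    unfolding sir_field_eq by blast
qed

lemma continuous_on_sir_field: "continuous_on sir_cube (sir_field A \<gamma>)"
  using lipschitz_sir_field lipschitz_on_continuous_on by blast

text \<open>A is only given on the cube, so the field is extended by its value at the nearest point of
  the cube; this extension is bounded and globally Lipschitz.\<close>

definition clamped_field :: "(real^'n) \<times> (real^'n) \<Rightarrow> (real^'n) \<times> (real^'n)" where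
  "clamped_field z = sir_field A \<gamma> (clamp_cube z)"

lemma clamped_field_eq: "z \<in> sir_cube \<Longrightarrow> clamped_field z = sir_field A \<gamma> z"
  by (simp add: clamped_field_def clamp_cube_id)

lemma clamped_field_nth:
  "fst (clamped_field z) $ i = - max 0 (min 1 (fst z $ i)) * force_of_infection (clamp_cube z) i"
  "snd (clamped_field z) $ i =
     max 0 (min 1 (fst z $ i)) * force_of_infection (clamp_cube z) i - \<gamma> * max 0 (min 1 (snd z $ i))"
  by (simp_all add: clamped_field_def sir_field_nth clamp_cube_nth)

lemma clamped_field_bounded_lipschitz: "\<exists>L M. bounded_lipschitz_field clamped_field L M"
proof -
  obtain L where L: "L-lipschitz_on sir_cube (sir_field A \<gamma>)"
    using lipschitz_sir_field by blast
  have "range clamp_cube \<subseteq> sir_cube"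
    using clamp_cube_in_sir_cube by blast
  then have "(L * 1)-lipschitz_on UNIV clamped_field"
    unfolding clamped_field_def
    by (intro lipschitz_on_compose2[OF lipschitz_clamp_cube] lipschitz_on_subset[OF L])
  moreover obtain M where "\<And>z. z \<in> sir_cube \<Longrightarrow> norm (sir_field A \<gamma> z) \<le> M"
    using compact_imp_bounded[OF compact_continuous_image[OF continuous_on_sir_field compact_sir_cube]]
    unfolding bounded_iff by blast
  then have "norm (clamped_field z) \<le> M" for z
    unfolding clamped_field_def using clamp_cube_in_sir_cube by blast
  ultimately show ?thesis
    using bounded_lipschitz_field.intro by blast
qed

lemma clamped_solution_in_sir_S:
  assumes u0: "u 0 \<in> sir_S"
    and deriv: "\<And>t. t \<ge> 0 \<Longrightarrow> (u has_vector_derivative clamped_field (u t)) (at t within {0..})"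
    and "T \<ge> 0"
  shows "u T \<in> sir_S"
proof -
  have dx: "((\<lambda>t. fst (u t) $ i) has_real_derivative fst (clamped_field (u t)) $ i) (at t within {0..})"
    and dy: "((\<lambda>t. snd (u t) $ i) has_real_derivative snd (clamped_field (u t)) $ i) (at t within {0..})"
    if "t \<ge> 0" for t i
    using has_real_derivative_fst_nth[OF deriv[OF that]] has_real_derivative_snd_nth[OF deriv[OF that]] .
  have nonneg: "0 \<le> force_of_infection (clamp_cube z) i" for z i
    by (rule force_of_infection_nonneg[OF clamp_cube_in_sir_cube])
  have x: "0 \<le> fst (u T) $ i" for i
    by (rule derivative_barrier_nonneg[OF dx])
      (use u0 \<open>T \<ge> 0\<close> in \<open>auto simp: clamped_field_nth sir_S_def sir_cube_def\<close>)
  have y: "0 \<le> snd (u T) $ i" for i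
    by (rule derivative_barrier_nonneg[OF dy])
      (use u0 \<open>T \<ge> 0\<close> nonneg in \<open>auto simp: clamped_field_nth sir_S_def sir_cube_def\<close>)
  have xy: "0 \<le> 1 - fst (u T) $ i - snd (u T) $ i" for i
  proof (rule derivative_barrier_nonneg[where f = "\<lambda>t. 1 - fst (u t) $ i - snd (u t) $ i"])
    show "((\<lambda>t. 1 - fst (u t) $ i - snd (u t) $ i) has_real_derivative
        0 - fst (clamped_field (u t)) $ i - snd (clamped_field (u t)) $ i) (at t within {0..})"
      if "t \<ge> 0" for t
      by (intro DERIV_diff DERIV_const dx dy that)
    show "0 \<le> 0 - fst (clamped_field (u t)) $ i - snd (clamped_field (u t)) $ i" for t
      using gamma_pos by (simp add: clamped_field_nth)
  qed (use u0 \<open>T \<ge> 0\<close> in \<open>auto simp: sir_S_def algebra_simps\<close>)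
  have "0 \<le> fst (u T) $ i \<and> fst (u T) $ i \<le> 1 \<and> 0 \<le> snd (u T) $ i \<and> snd (u T) $ i \<le> 1
      \<and> fst (u T) $ i + snd (u T) $ i \<le> 1" for i
    using x[of i] y[of i] xy[of i] by linarith
  then show ?thesis
    unfolding sir_S_def sir_cube_def by simp
qed

lemma sir_solution_clamped_derivative:
  assumes "is_sir_solution A \<gamma> z0 sol" "t \<ge> 0"
  shows "(sol has_vector_derivative clamped_field (sol t)) (at t within {0..})"
  using assms clamped_field_eq unfolding is_sir_solution_def by auto

theorem sir_solution_exists:
  assumes "z0 \<in> sir_S"
  shows "\<exists>sol. is_sir_solution A \<gamma> z0 sol \<and> (\<forall>t\<ge>0. sol t \<in> sir_S)"
proof -
  obtain L M where "bounded_lipschitz_field clamped_field L M"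
    using clamped_field_bounded_lipschitz by blast
  then obtain u where u0: "u 0 = z0"
    and deriv: "\<forall>t\<ge>0. (u has_vector_derivative clamped_field (u t)) (at t within {0..})"
    using bounded_lipschitz_field.solution_exists by blast
  have in_S: "u t \<in> sir_S" if "t \<ge> 0" for t
    using clamped_solution_in_sir_S[of u t] u0 deriv assms that by auto
  then have "is_sir_solution A \<gamma> z0 u"
    unfolding is_sir_solution_def using u0 deriv clamped_field_eq by (auto simp: sir_S_def)
  with in_S show ?thesis
    by blast
qed

theorem sir_solution_unique:
  assumes u: "is_sir_solution A \<gamma> z0 u" and v: "is_sir_solution A \<gamma> z0 v" and "t \<ge> 0"
  shows "u t = v t"
proof -
  obtain L M where "bounded_lipschitz_field clamped_field L M"
    using clamped_field_bounded_lipschitz by blast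
  moreover have "u 0 = v 0"
    using u v unfolding is_sir_solution_def by simp
  ultimately show ?thesis
    using bounded_lipschitz_field.solution_unique sir_solution_clamped_derivative[OF u]
      sir_solution_clamped_derivative[OF v] \<open>t \<ge> 0\<close>
    by blast
qed

lemma sir_solution_continuous_derivative:
  assumes "is_sir_solution A \<gamma> z0 sol"
  shows "continuous_on {0..} (\<lambda>t. sir_field A \<gamma> (sol t))"
proof (rule continuous_on_compose2[OF continuous_on_sir_field])
  show "continuous_on {0..} sol"
    using assms unfolding is_sir_solution_def by (auto intro!: continuous_on_vector_derivative)
  show "sol ` {0..} \<subseteq> sir_cube"
    using assms unfolding is_sir_solution_def by auto
qed

lemma sir_equilibria:
  "{z \<in> sir_S. sir_field A \<gamma> z = 0} = {(x, 0) | x. \<forall>i. 0 \<le> x $ i \<and> x $ i \<le> 1}"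
proof (intro set_eqI iffI)
  fix z :: "(real^'n) \<times> (real^'n)"
  assume z: "z \<in> {z \<in> sir_S. sir_field A \<gamma> z = 0}"
  have "\<gamma> * snd z $ i = - (fst (sir_field A \<gamma> z) $ i + snd (sir_field A \<gamma> z) $ i)" for i
    by (simp add: sir_field_nth)
  then have "snd z = 0"
    using z gamma_pos by (simp add: vec_eq_iff)
  with z show "z \<in> {(x, 0) | x. \<forall>i. 0 \<le> x $ i \<and> x $ i \<le> 1}"
    unfolding sir_S_def sir_cube_def by (cases z) auto
next
  fix z :: "(real^'n) \<times> (real^'n)"
  assume "z \<in> {(x, 0) | x. \<forall>i. 0 \<le> x $ i \<and> x $ i \<le> 1}"
  then obtain x :: "real^'n" where "z = (x, 0)" "\<forall>i. 0 \<le> x $ i \<and> x $ i \<le> 1"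
    by blast
  moreover have "sir_field A \<gamma> (x, 0) = 0"
    by (simp add: sir_field_def vec_eq_iff zero_prod_def)
  ultimately show "z \<in> {z \<in> sir_S. sir_field A \<gamma> z = 0}"
    by (simp add: sir_S_def sir_cube_def)
qed

theorem sir_well_posed:
  assumes "z0 \<in> sir_S"
  shows "\<exists>sol. is_sir_solution A \<gamma> z0 sol
    \<and> (\<forall>sol2. is_sir_solution A \<gamma> z0 sol2 \<longrightarrow> (\<forall>t\<ge>0. sol2 t = sol t))
    \<and> (\<exists>D. (\<forall>t\<ge>0. (sol has_vector_derivative D t) (at t within {0..})) \<and> continuous_on {0..} D)
    \<and> (\<forall>t\<ge>0. sol t \<in> sir_S)"
proof -
  obtain sol where sol: "is_sir_solution A \<gamma> z0 sol" "\<forall>t\<ge>0. sol t \<in> sir_S"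
    using sir_solution_exists[OF assms] by blast
  have "\<forall>t\<ge>0. (sol has_vector_derivative sir_field A \<gamma> (sol t)) (at t within {0..})"
    using sol(1) unfolding is_sir_solution_def by blast
  then have derivative: "\<exists>D. (\<forall>t\<ge>0. (sol has_vector_derivative D t) (at t within {0..}))
      \<and> continuous_on {0..} D"
    using sir_solution_continuous_derivative[OF sol(1)]
    by (intro exI[of _ "\<lambda>t. sir_field A \<gamma> (sol t)"]) simp
  have unique: "\<forall>sol2. is_sir_solution A \<gamma> z0 sol2 \<longrightarrow> (\<forall>t\<ge>0. sol2 t = sol t)"
    by (blast intro: sir_solution_unique[OF _ sol(1)])
  show ?thesis
    by (rule exI[of _ sol]) (intro conjI sol unique derivative)
qed

end

locale sir_trajectory = sir_system +
  fixes z0 sol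
  assumes solution: "is_sir_solution A \<gamma> z0 sol"
begin

lemma trajectory_in_sir_cube: "t \<ge> 0 \<Longrightarrow> sol t \<in> sir_cube"
  using solution unfolding is_sir_solution_def by blast

lemma trajectory_nth_bounds:
  assumes "t \<ge> 0"
  shows "0 \<le> fst (sol t) $ i" "fst (sol t) $ i \<le> 1" "0 \<le> snd (sol t) $ i" "snd (sol t) $ i \<le> 1"
  using trajectory_in_sir_cube[OF assms] unfolding sir_cube_def by auto

lemma trajectory_has_derivative:
  "t \<ge> 0 \<Longrightarrow> (sol has_vector_derivative sir_field A \<gamma> (sol t)) (at t within {0..})"
  using solution unfolding is_sir_solution_def by blast

lemma susceptible_has_derivative:
  "t \<ge> 0 \<Longrightarrow> ((\<lambda>t. fst (sol t) $ i) has_real_derivative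
    - fst (sol t) $ i * force_of_infection (sol t) i) (at t within {0..})"
  using has_real_derivative_fst_nth[OF trajectory_has_derivative, of t i] by (simp add: sir_field_nth)

lemma infected_has_derivative:
  "t \<ge> 0 \<Longrightarrow> ((\<lambda>t. snd (sol t) $ i) has_real_derivative
    fst (sol t) $ i * force_of_infection (sol t) i - \<gamma> * snd (sol t) $ i) (at t within {0..})"
  using has_real_derivative_snd_nth[OF trajectory_has_derivative, of t i] by (simp add: sir_field_nth)

lemma susceptible_nonincreasing:
  assumes "0 \<le> s" "s \<le> t"
  shows "fst (sol t) $ i \<le> fst (sol s) $ i"
  by (rule nonincreasing_if_derivative_nonpos[OF susceptible_has_derivative])
    (use assms trajectory_nth_bounds force_of_infection_nonneg[OF trajectory_in_sir_cube] in auto)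

lemma susceptible_pos:
  assumes "fst (sol 0) $ i > 0" "t \<ge> 0"
  shows "fst (sol t) $ i > 0"
proof -
  obtain B where B: "\<And>z. z \<in> sir_cube \<Longrightarrow> force_of_infection z i \<le> B"
    using force_of_infection_bounded by blast
  have "fst (sol r) $ i * force_of_infection (sol r) i \<le> fst (sol r) $ i * B" if "r \<ge> 0" for r
    using B[OF trajectory_in_sir_cube[OF that]] trajectory_nth_bounds[OF that]
    by (intro mult_left_mono)
  then have "- fst (sol r) $ i * force_of_infection (sol r) i \<ge> - B * fst (sol r) $ i" if "r \<ge> 0" for r
    using that by (simp add: mult.commute)
  with susceptible_has_derivative have "fst (sol 0) $ i * exp (- B * t) \<le> fst (sol t) $ i"
    using \<open>t \<ge> 0\<close> by (rule exp_lower_bound_if_derivative_ge)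
  moreover have "fst (sol 0) $ i * exp (- B * t) > 0"
    using assms(1) by simp
  ultimately show ?thesis
    by linarith
qed

lemma infected_pos:
  assumes "snd (sol 0) $ i > 0" "t \<ge> 0"
  shows "snd (sol t) $ i > 0"
proof -
  have "fst (sol r) $ i * force_of_infection (sol r) i - \<gamma> * snd (sol r) $ i \<ge> - \<gamma> * snd (sol r) $ i"
    if "r \<ge> 0" for r
    using force_of_infection_nonneg[OF trajectory_in_sir_cube[OF that]] trajectory_nth_bounds[OF that] by simp
  with infected_has_derivative have "snd (sol 0) $ i * exp (- \<gamma> * t) \<le> snd (sol t) $ i"
    using \<open>t \<ge> 0\<close> by (rule exp_lower_bound_if_derivative_ge)
  moreover have "snd (sol 0) $ i * exp (- \<gamma> * t) > 0"
    using assms(1) by simp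
  ultimately show ?thesis
    by linarith
qed

lemma total_has_derivative:
  "t \<ge> 0 \<Longrightarrow> ((\<lambda>t. fst (sol t) $ i + snd (sol t) $ i) has_real_derivative
    - (\<gamma> * snd (sol t) $ i)) (at t within {0..})"
  using DERIV_add[OF susceptible_has_derivative[of t i] infected_has_derivative[of t i]] by simp

lemma susceptible_tendsto_Inf:
  "((\<lambda>t. fst (sol t) $ i) \<longlongrightarrow> Inf ((\<lambda>t. fst (sol t) $ i) ` {0..})) at_top"
  by (rule tendsto_Inf_if_nonincreasing[where c = 0])
    (use susceptible_nonincreasing trajectory_nth_bounds in auto)

lemma total_tendsto_Inf:
  "((\<lambda>t. fst (sol t) $ i + snd (sol t) $ i)
    \<longlongrightarrow> Inf ((\<lambda>t. fst (sol t) $ i + snd (sol t) $ i) ` {0..})) at_top"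
proof (rule tendsto_Inf_if_nonincreasing[where c = 0])
  show "fst (sol t) $ i + snd (sol t) $ i \<le> fst (sol s) $ i + snd (sol s) $ i"
    if "0 \<le> s" "s \<le> t" for s t
    by (rule nonincreasing_if_derivative_nonpos[OF total_has_derivative])
      (use that gamma_pos trajectory_nth_bounds in auto)
  show "0 \<le> fst (sol t) $ i + snd (sol t) $ i" if "0 \<le> t" for t
    using trajectory_nth_bounds[OF that] by simp
qed

lemma infected_tendsto_zero: "((\<lambda>t. snd (sol t) $ i) \<longlongrightarrow> 0) at_top"
proof -
  define \<eta> where "\<eta> = Inf ((\<lambda>t. fst (sol t) $ i + snd (sol t) $ i) ` {0..})
    - Inf ((\<lambda>t. fst (sol t) $ i) ` {0..})"
  have lim: "((\<lambda>t. snd (sol t) $ i) \<longlongrightarrow> \<eta>) at_top"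
    using tendsto_diff[OF total_tendsto_Inf[of i] susceptible_tendsto_Inf[of i]] unfolding \<eta>_def by simp
  have "0 \<le> fst (sol t) $ i + snd (sol t) $ i" if "t \<ge> 0" for t
    using trajectory_nth_bounds[OF that] by simp
  with total_has_derivative have "- (\<gamma> * \<eta>) \<ge> 0"
    using tendsto_minus[OF tendsto_mult_left[OF lim]] by (rule derivative_limit_nonneg_if_bdd_below)
  then have "\<eta> \<le> 0"
    using gamma_pos by (simp add: mult_le_0_iff)
  moreover have "\<eta> \<ge> 0"
    by (rule tendsto_lowerbound[OF lim])
      (use trajectory_nth_bounds in \<open>auto simp: eventually_at_top_linorder intro!: exI[of _ 0]\<close>)
  ultimately show ?thesis
    using lim by simp
qed

lemma trajectory_tendsto:
  "\<exists>xs. (\<forall>i. 0 \<le> xs $ i \<and> xs $ i \<le> fst (sol 0) $ i) \<and> (sol \<longlongrightarrow> (xs, 0)) at_top"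
proof -
  define xs where "xs = (\<chi> i. Inf ((\<lambda>t. fst (sol t) $ i) ` {0..}))"
  have lim: "((\<lambda>t. fst (sol t) $ i) \<longlongrightarrow> xs $ i) at_top" for i
    unfolding xs_def using susceptible_tendsto_Inf by simp
  then have "((\<lambda>t. fst (sol t)) \<longlongrightarrow> xs) at_top"
    by (intro vec_tendstoI)
  moreover have "((\<lambda>t. snd (sol t)) \<longlongrightarrow> 0) at_top"
    using infected_tendsto_zero by (intro vec_tendstoI) simp
  ultimately have "(sol \<longlongrightarrow> (xs, 0)) at_top"
    using tendsto_Pair by fastforce
  moreover have "0 \<le> xs $ i" "xs $ i \<le> fst (sol 0) $ i" for i
    by (rule tendsto_lowerbound[OF lim] tendsto_upperbound[OF lim],
        use trajectory_nth_bounds susceptible_nonincreasing[of 0] in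
        \<open>auto simp: eventually_at_top_linorder intro!: exI[of _ 0]\<close>)+
  ultimately show ?thesis
    by blast
qed

end

context sir_system
begin

theorem sir_solution_asymptotics:
  assumes "is_sir_solution A \<gamma> z0 sol"
  shows "(\<forall>i. (\<forall>s t. 0 \<le> s \<longrightarrow> s \<le> t \<longrightarrow> fst (sol t) $ i \<le> fst (sol s) $ i)
      \<and> (fst (sol 0) $ i > 0 \<longleftrightarrow> (\<forall>t\<ge>0. fst (sol t) $ i > 0)))
    \<and> (\<forall>i. snd (sol 0) $ i > 0 \<longrightarrow> (\<forall>t>0. snd (sol t) $ i > 0))
    \<and> (\<exists>xs :: real^'n. (\<forall>i. 0 \<le> xs $ i \<and> xs $ i \<le> fst (sol 0) $ i)
      \<and> (sol \<longlongrightarrow> (xs, 0)) at_top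
      \<and> (xs, 0) \<in> {(x, 0) | x. \<forall>i. 0 \<le> x $ i \<and> x $ i \<le> 1})"
proof -
  interpret sir_trajectory A A' \<gamma> z0 sol
    using assms by unfold_locales
  have monotone: "\<forall>i. (\<forall>s t. 0 \<le> s \<longrightarrow> s \<le> t \<longrightarrow> fst (sol t) $ i \<le> fst (sol s) $ i)
      \<and> (fst (sol 0) $ i > 0 \<longleftrightarrow> (\<forall>t\<ge>0. fst (sol t) $ i > 0))"
    using susceptible_nonincreasing susceptible_pos by auto
  have positive: "\<forall>i. snd (sol 0) $ i > 0 \<longrightarrow> (\<forall>t>0. snd (sol t) $ i > 0)"
    using infected_pos by auto
  obtain xs where xs: "\<forall>i. 0 \<le> xs $ i \<and> xs $ i \<le> fst (sol 0) $ i" "(sol \<longlongrightarrow> (xs, 0)) at_top"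
    using trajectory_tendsto by blast
  moreover have "\<forall>i. 0 \<le> xs $ i \<and> xs $ i \<le> 1"
    using xs(1) trajectory_nth_bounds(2)[of 0] by (meson order.trans order.refl)
  ultimately have limit: "\<exists>xs :: real^'n. (\<forall>i. 0 \<le> xs $ i \<and> xs $ i \<le> fst (sol 0) $ i)
      \<and> (sol \<longlongrightarrow> (xs, 0)) at_top
      \<and> (xs, 0) \<in> {(x, 0) | x. \<forall>i. 0 \<le> x $ i \<and> x $ i \<le> 1}"
    by blast
  show ?thesis
    by (intro conjI monotone positive limit)
qed

end

theorem proposition1:
  fixes A :: "(real^'n) \<times> (real^'n) \<Rightarrow> real^'n^'n"
    and A' :: "(real^'n) \<times> (real^'n) \<Rightarrow> ((real^'n) \<times> (real^'n)) \<Rightarrow>\<^sub>L (real^'n^'n)"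
    and \<gamma> :: real
  assumes gamma_pos: "\<gamma> > 0"
    and A_nonneg: "\<forall>z\<in>sir_cube. \<forall>i j. 0 \<le> A z $ i $ j"
    and A_deriv: "\<forall>z\<in>sir_cube. (A has_derivative blinfun_apply (A' z)) (at z within sir_cube)"
    and A'_cont: "continuous_on sir_cube A'"
  shows
    "(\<forall>z0\<in>sir_S. \<exists>sol. is_sir_solution A \<gamma> z0 sol
        \<and> (\<forall>sol2. is_sir_solution A \<gamma> z0 sol2 \<longrightarrow> (\<forall>t\<ge>0. sol2 t = sol t))
        \<and> (\<exists>D. (\<forall>t\<ge>0. (sol has_vector_derivative D t) (at t within {0..}))
               \<and> continuous_on {0..} D)
        \<and> (\<forall>t\<ge>0. sol t \<in> sir_S))
   \<and> (\<forall>z0\<in>sir_S. \<forall>sol. is_sir_solution A \<gamma> z0 sol \<longrightarrow>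
       ((\<forall>i. (\<forall>s t. 0 \<le> s \<longrightarrow> s \<le> t \<longrightarrow> fst (sol t) $ i \<le> fst (sol s) $ i)
          \<and> (fst (sol 0) $ i > 0 \<longleftrightarrow> (\<forall>t\<ge>0. fst (sol t) $ i > 0)))
     \<and> (\<forall>i. snd (sol 0) $ i > 0 \<longrightarrow> (\<forall>t>0. snd (sol t) $ i > 0))
     \<and> (\<exists>xs :: real^'n. (\<forall>i. 0 \<le> xs $ i \<and> xs $ i \<le> fst (sol 0) $ i)
          \<and> (sol \<longlongrightarrow> (xs, 0)) at_top
          \<and> (xs, 0) \<in> {(x, 0) | x. \<forall>i. 0 \<le> x $ i \<and> x $ i \<le> 1})))
   \<and> {z \<in> sir_S. sir_field A \<gamma> z = 0} = {(x, 0) | x. \<forall>i. 0 \<le> x $ i \<and> x $ i \<le> 1}"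
proof -
  interpret sir_system A A' \<gamma>
    using assms by unfold_locales
  show ?thesis
    by (intro sir_well_posed sir_solution_asymptotics sir_equilibria conjI ballI allI impI)
qed

end
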